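(* Let $\mathcal{P}_t=\{0=s_0<s_1<\dots<s_{N_t}=t\}$, let $\mathbf{Y}_{s_0},\dots,\mathbf{Y}_{s_{N_t}}\in\mathbb{R}^d$, and define forward differences by $\hat{D}^0\mathbf{Y}_{s_n}=\mathbf{Y}_{s_n}$ and $\hat{D}^k\mathbf{Y}_{s_n}=(\hat{D}^{k-1}\mathbf{Y}_{s_{n+1}}-\hat{D}^{k-1}\mathbf{Y}_{s_n})/(s_{n+1}-s_n)$. Then for $k\in\{1,\dots,p-1\}$ and $n\in\{0,\dots,N_t-k\}$, $$\hat{D}^k\mathbf{Y}_{s_n}=\sum_{i=1}^k(-1)^{k+i}\sum_{\substack{n_1,\dots,n_i\ge1\\ n_1+\dots+n_i=k}}(s_{n+1}-s_n)^{-n_1}\cdots(s_{n+i}-s_{n+i-1})^{-n_i}\,(\mathbf{Y}_{s_{n+i}}-\mathbf{Y}_{s_{n+i-1}}).$$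
   Context: $p\ge2$ is an integer; the $n_j$ range over positive integers. *)

theory Defs
  imports "HOL-Analysis.Analysis"
begin

fun Dhat :: "(nat \<Rightarrow> real) \<Rightarrow> (nat \<Rightarrow> real ^ 'd) \<Rightarrow> nat \<Rightarrow> nat \<Rightarrow> real ^ 'd" where
  "Dhat s Y 0 n = Y n"
| "Dhat s Y (Suc k) n =
     (1 / (s (Suc n) - s n)) *\<^sub>R (Dhat s Y k (Suc n) - Dhat s Y k n)"

definition compositions :: "nat \<Rightarrow> nat \<Rightarrow> nat list set" where
  "compositions k i = {ns. length ns = i \<and> (\<forall>m\<in>set ns. m \<ge> 1) \<and> sum_list ns = k}"

end

theory Submission
  imports Defs
begin

text \<open>
  Let h_m = s_(m+1) - s_m. By the defining recursion of the differences, D^k Y_n is a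
  combination of the increments Y_(n+i) - Y_(n+i-1) whose i-th coefficient has the form
  (-1)^(k+i) c(k,i,n), where c(k+1, i+1, n) = (c(k, i, n+1) + c(k, i+1, n)) / h_n.
  The sum over compositions of k into i parts of the products of the h_(n+j)^(-n_j)
  obeys the same recursion: a composition of k+1 either begins with the part 1, which is
  dropped, or with a part of size at least 2, which is decreased by one.
\<close>

lemma finite_compositions: "finite (compositions k i)"
proof (rule finite_subset)
  show "compositions k i \<subseteq> {ns. set ns \<subseteq> {0..k} \<and> length ns = i}"
    unfolding compositions_def using elem_le_sum_list by (auto simp: in_set_conv_nth)
  show "finite {ns. set ns \<subseteq> {0..k} \<and> length ns = i}"
    by (rule finite_lists_length_eq) simp
qed

lemma length_le_sum_list_if_positive:
  "\<forall>m\<in>set ns. (m::nat) \<ge> 1 \<Longrightarrow> length ns \<le> sum_list ns"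
  by (induction ns) auto

lemma compositions_eq_empty_if_less: "k < i \<Longrightarrow> compositions k i = {}"
  unfolding compositions_def using length_le_sum_list_if_positive by fastforce

lemma compositions_0_eq_empty: "k \<ge> 1 \<Longrightarrow> compositions k 0 = {}"
  unfolding compositions_def by auto

lemma compositions_Suc_Suc:
  "compositions (Suc k) (Suc i) =
     Cons 1 ` compositions k i \<union> (\<lambda>ns. Suc (hd ns) # tl ns) ` compositions k (Suc i)"
    (is "?lhs = ?ones \<union> ?bumped")
proof
  show "?lhs \<subseteq> ?ones \<union> ?bumped"
  proof
    fix ns assume "ns \<in> ?lhs"
    then obtain m r where ns: "ns = m # r" "m \<ge> 1" "length r = i"
        "\<forall>x\<in>set r. x \<ge> 1" "m + sum_list r = Suc k"
      unfolding compositions_def by (cases ns) auto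
    show "ns \<in> ?ones \<union> ?bumped"
    proof (cases "m = 1")
      case True
      then show ?thesis using ns by (auto simp: compositions_def)
    next
      case False
      then have "ns = Suc (hd ((m - 1) # r)) # tl ((m - 1) # r)"
        and "(m - 1) # r \<in> compositions k (Suc i)"
        using ns by (auto simp: compositions_def)
      then show ?thesis by blast
    qed
  qed
  show "?ones \<union> ?bumped \<subseteq> ?lhs"
    by (auto simp: compositions_def length_Suc_conv)
qed

definition composition_weight :: "(nat \<Rightarrow> real) \<Rightarrow> nat \<Rightarrow> nat list \<Rightarrow> real" where
  "composition_weight s n ns = (\<Prod>j<length ns. inverse (s (n + j + 1) - s (n + j)) ^ (ns ! j))"

lemma composition_weight_Cons:
  "composition_weight s n (m # ns) =
     inverse (s (Suc n) - s n) ^ m * composition_weight s (Suc n) ns"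
  unfolding composition_weight_def by (simp add: prod.lessThan_Suc_shift del: prod.lessThan_Suc)

definition composition_coeff :: "(nat \<Rightarrow> real) \<Rightarrow> nat \<Rightarrow> nat \<Rightarrow> nat \<Rightarrow> real" where
  "composition_coeff s k i n = (\<Sum>ns\<in>compositions k i. composition_weight s n ns)"

lemma composition_coeff_eq_0_if_less: "k < i \<Longrightarrow> composition_coeff s k i n = 0"
  by (simp add: composition_coeff_def compositions_eq_empty_if_less)

lemma composition_coeff_0: "k \<ge> 1 \<Longrightarrow> composition_coeff s k 0 n = 0"
  by (simp add: composition_coeff_def compositions_0_eq_empty)

lemma composition_coeff_1_1: "composition_coeff s 1 1 n = inverse (s (Suc n) - s n)"
proof -
  have "compositions 1 1 = {[1]}"
    unfolding compositions_def by (auto simp: length_Suc_conv)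
  then show ?thesis
    by (simp add: composition_coeff_def composition_weight_def)
qed

lemma composition_coeff_Suc_Suc:
  "composition_coeff s (Suc k) (Suc i) n =
     inverse (s (Suc n) - s n) * (composition_coeff s k i (Suc n) + composition_coeff s k (Suc i) n)"
proof -
  let ?bump = "\<lambda>ns. Suc (hd ns) # tl ns"
  let ?w = "composition_weight s n"
  have nonempty: "ns \<noteq> []" and hd_pos: "hd ns \<ge> 1" if "ns \<in> compositions k (Suc i)" for ns
    using that by (cases ns; auto simp: compositions_def)+
  have inj: "inj_on ?bump (compositions k (Suc i))"
    by (rule inj_onI) (metis list.collapse list.inject nat.inject nonempty)
  have disjoint: "Cons 1 ` compositions k i \<inter> ?bump ` compositions k (Suc i) = {}"
    using hd_pos by fastforce
  have "composition_coeff s (Suc k) (Suc i) n =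
      sum ?w (Cons 1 ` compositions k i) + sum ?w (?bump ` compositions k (Suc i))"
    unfolding composition_coeff_def compositions_Suc_Suc
    by (rule sum.union_disjoint) (use disjoint finite_compositions in auto)
  also have "sum ?w (Cons 1 ` compositions k i) =
      inverse (s (Suc n) - s n) * composition_coeff s k i (Suc n)"
    by (simp add: sum.reindex composition_weight_Cons composition_coeff_def sum_distrib_left)
  also have "sum ?w (?bump ` compositions k (Suc i)) =
      inverse (s (Suc n) - s n) * composition_coeff s k (Suc i) n"
    unfolding sum.reindex[OF inj] composition_coeff_def sum_distrib_left
    by (rule sum.cong) (auto dest!: nonempty simp: neq_Nil_conv composition_weight_Cons)
  finally show ?thesis by (simp add: distrib_left)
qed

lemma Dhat_eq_sum_composition_coeff:
  assumes "k \<ge> 1"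
  shows "Dhat s Y k n =
    (\<Sum>i = 1..k. ((-1) ^ (k + i) * composition_coeff s k i n) *\<^sub>R (Y (n + i) - Y (n + i - 1)))"
  using assms
proof (induction k arbitrary: n rule: nat_induct_at_least)
  case base
  then show ?case by (simp add: composition_coeff_1_1[simplified] divide_inverse)
next
  case (Suc k)
  define \<Delta> where "\<Delta> i = Y (n + i) - Y (n + i - 1)" for i
  define a where "a k i m = (-1) ^ (k + i) * composition_coeff s k i m" for k i m
  define h where "h = inverse (s (Suc n) - s n)"
  have shifted: "Dhat s Y k (Suc n) = (\<Sum>i = 0..k. a k i (Suc n) *\<^sub>R \<Delta> (Suc i))"
    using Suc.IH[of "Suc n"] Suc.hyps
    by (simp add: sum.atLeast_Suc_atMost[of 0 k] a_def \<Delta>_def composition_coeff_0)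
  have unshifted: "Dhat s Y k n = (\<Sum>i = 0..k. a k (Suc i) n *\<^sub>R \<Delta> (Suc i))"
  proof -
    have "Dhat s Y k n = (\<Sum>i = Suc 0..Suc (k - 1). a k i n *\<^sub>R \<Delta> i)"
      using Suc.IH[of n] Suc.hyps by (simp add: a_def \<Delta>_def)
    also have "\<dots> = (\<Sum>i = 0..k - 1. a k (Suc i) n *\<^sub>R \<Delta> (Suc i))"
      by (rule sum.shift_bounds_cl_Suc_ivl)
    also have "\<dots> = (\<Sum>i = 0..k. a k (Suc i) n *\<^sub>R \<Delta> (Suc i))"
      using Suc.hyps by (cases k) (simp_all add: a_def composition_coeff_eq_0_if_less)
    finally show ?thesis .
  qed
  have "Dhat s Y (Suc k) n = h *\<^sub>R (Dhat s Y k (Suc n) - Dhat s Y k n)"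
    by (simp add: h_def divide_inverse)
  also have "\<dots> = (\<Sum>i = 0..k. (h * (a k i (Suc n) - a k (Suc i) n)) *\<^sub>R \<Delta> (Suc i))"
    unfolding shifted unshifted
    by (simp add: scaleR_sum_right sum_subtractf[symmetric] algebra_simps)
  also have "\<dots> = (\<Sum>i = 0..k. a (Suc k) (Suc i) n *\<^sub>R \<Delta> (Suc i))"
    by (simp add: a_def h_def composition_coeff_Suc_Suc algebra_simps)
  also have "\<dots> = (\<Sum>i = Suc 0..Suc k. a (Suc k) i n *\<^sub>R \<Delta> i)"
    by (rule sum.shift_bounds_cl_Suc_ivl[symmetric])
  finally show ?case by (simp add: a_def \<Delta>_def)
qed

theorem lemma7:
  fixes p :: nat and N :: nat and t :: real
    and s :: "nat \<Rightarrow> real" and Y :: "nat \<Rightarrow> real ^ 'd"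
    and k n :: nat
  assumes "p \<ge> 2"
    and "s 0 = 0" and "s N = t"
    and "\<And>j. j < N \<Longrightarrow> s j < s (Suc j)"
    and "1 \<le> k" and "k \<le> p - 1"
    and "n + k \<le> N"
  shows "Dhat s Y k n =
    (\<Sum>i = 1..k. ((-1) ^ (k + i)) *\<^sub>R
       (\<Sum>ns\<in>compositions k i.
          (\<Prod>j<i. inverse (s (n + j + 1) - s (n + j)) ^ (ns ! j))
            *\<^sub>R (Y (n + i) - Y (n + i - 1))))"
proof -
  have "composition_coeff s k i n =
      (\<Sum>ns\<in>compositions k i. \<Prod>j<i. inverse (s (n + j + 1) - s (n + j)) ^ (ns ! j))" for i
    unfolding composition_coeff_def composition_weight_def
    by (rule sum.cong) (auto simp: compositions_def)
  then show ?thesis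
    using Dhat_eq_sum_composition_coeff[OF \<open>1 \<le> k\<close>, of s Y n]
    by (simp add: scaleR_sum_left[symmetric])
qed

end
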